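(* Let $N\ge1$, $\Delta v=1/N$, $v_j=-1+\frac{\Delta v}{2}+(j-1)\Delta v$ for $j=1,\dots,2N$, $v_{j+1/2}=-1+j\Delta v$ for $j=0,\dots,2N$ (so $v_{1/2}=-1$, $v_{2N+1/2}=1$), and $V=(v_1,\dots,v_{2N})^T$. Define $D\in\mathcal{M}_{2N,2N}(\mathbb{R})$ by $$(DF)_j=\frac{1}{\Delta v^2}\Big((1-v_{j+1/2}^2)(F_{j+1}-F_j)-(1-v_{j-1/2}^2)(F_j-F_{j-1})\Big),\quad j=1,\dots,2N,$$ (the terms involving $F_0$ and $F_{2N+1}$ vanish since $1-v_{1/2}^2=1-v_{2N+1/2}^2=0$). Then $D\mathbf{1}=0$ and $DV=-2V$, where $\mathbf{1}=(1,\dots,1)^T$. Moreover $D$ is symmetric, its off-diagonal coefficients are nonnegative, and $I+\delta D$ is a bistochastic matrix for all $\delta>0$ small enough.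
   Context: $D$ is the discretization of the one-dimensional Fokker–Planck operator $\partial_v((1-v^2)\partial_v f)$ on $v\in[-1,1]$. A bistochastic matrix is a matrix with nonnegative entries whose rows and columns each sum to $1$. *)

theory Defs
  imports Complex_Main
begin

text \<open>Square matrices of varying size n are represented as functions
  nat => nat => real, with row/column indices ranging over {1..n}
  (as in the paper); vectors as nat => real indexed by {1..n}.\<close>

definition dv :: "nat \<Rightarrow> real" where
  "dv N = 1 / real N"

definition vc :: "nat \<Rightarrow> nat \<Rightarrow> real" where
  "vc N j = -1 + dv N / 2 + (real j - 1) * dv N"

text \<open>Interfaces: vh N j = v_{j+1/2} = -1 + j dv, j = 0..2N.\<close>
definition vh :: "nat \<Rightarrow> nat \<Rightarrow> real" where
  "vh N j = -1 + real j * dv N"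

text \<open>Entries of the matrix D in M_{2N,2N}(R), read off from
  (DF)_j = ((1 - v_{j+1/2}^2)(F_{j+1}-F_j) - (1 - v_{j-1/2}^2)(F_j - F_{j-1})) / dv^2
  (the terms with F_0, F_{2N+1} have zero coefficient and are dropped).\<close>
definition Dmat :: "nat \<Rightarrow> nat \<Rightarrow> nat \<Rightarrow> real" where
  "Dmat N j k =
    (if j \<in> {1..2*N} \<and> k \<in> {1..2*N} then
       (if k = j + 1 then (1 - (vh N j)\<^sup>2) / (dv N)\<^sup>2
        else if k + 1 = j then (1 - (vh N (j - 1))\<^sup>2) / (dv N)\<^sup>2
        else if k = j then - ((1 - (vh N j)\<^sup>2) + (1 - (vh N (j - 1))\<^sup>2)) / (dv N)\<^sup>2
        else 0)
     else 0)"

definition matvec :: "nat \<Rightarrow> (nat \<Rightarrow> nat \<Rightarrow> real) \<Rightarrow> (nat \<Rightarrow> real) \<Rightarrow> nat \<Rightarrow> real" where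
  "matvec n M x j = (\<Sum>k = 1..n. M j k * x k)"

definition idmat :: "nat \<Rightarrow> nat \<Rightarrow> real" where
  "idmat j k = (if j = k then 1 else 0)"

definition bistochastic :: "nat \<Rightarrow> (nat \<Rightarrow> nat \<Rightarrow> real) \<Rightarrow> bool" where
  "bistochastic n M \<longleftrightarrow>
     (\<forall>i\<in>{1..n}. \<forall>j\<in>{1..n}. 0 \<le> M i j) \<and>
     (\<forall>i\<in>{1..n}. (\<Sum>j = 1..n. M i j) = 1) \<and>
     (\<forall>j\<in>{1..n}. (\<Sum>i = 1..n. M i j) = 1)"

end

theory Submission
  imports Defs
begin

text \<open>D is in conservative form, (DF)_j = a_j (F_{j+1} - F_j) - a_{j-1} (F_j - F_{j-1}),
  with interface coefficients a_j = (1 - v_{j+1/2}^2) / dv^2 = j (2N - j) vanishing at both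
  ends of the grid. Such a matrix is symmetric with zero row sums, and its off-diagonal
  entries are the a_j, which are nonnegative. Since a_j <= N^2, the diagonal is at least
  -2N^2, so I + delta D is bistochastic for delta <= 1/(2N^2). Finally V has constant
  increments 1/N, so (DV)_j = (a_j - a_{j-1}) / N = (2N - 2j + 1) / N = -2 v_j.\<close>

lemma sum_atLeastAtMost_three_terms:
  fixes f :: "nat \<Rightarrow> 'a::comm_monoid_add"
  assumes "j \<in> {1..n}" "\<And>k. k \<notin> {j-1, j, j+1} \<Longrightarrow> f k = 0" "f 0 = 0" "f (n+1) = 0"
  shows "(\<Sum>k = 1..n. f k) = f (j-1) + f j + f (j+1)"
proof -
  have "(\<Sum>k = 1..n. f k) = (\<Sum>k = 0..n+1. f k)"
  proof (rule sum.mono_neutral_left)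
    show "\<forall>k\<in>{0..n+1} - {1..n}. f k = 0"
      using assms(3,4) by (auto simp: le_Suc_eq Suc_le_eq)
  qed auto
  also have "\<dots> = (\<Sum>k\<in>{j-1, j, j+1}. f k)"
    by (rule sum.mono_neutral_right) (use assms in auto)
  also have "\<dots> = f (j-1) + f j + f (j+1)"
  proof -
    have "j - 1 \<notin> {j, j+1}"
      using assms(1) by auto
    then show ?thesis
      by (simp add: add.assoc)
  qed
  finally show ?thesis .
qed

definition flux_matrix :: "nat \<Rightarrow> (nat \<Rightarrow> real) \<Rightarrow> nat \<Rightarrow> nat \<Rightarrow> real" where
  "flux_matrix n a j k =
    (if j \<in> {1..n} \<and> k \<in> {1..n} then
       (if k = j + 1 then a j
        else if k + 1 = j then a (j - 1)
        else if k = j then - (a j + a (j - 1))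
        else 0)
     else 0)"

lemma flux_matrix_sym: "flux_matrix n a j k = flux_matrix n a k j"
  by (auto simp: flux_matrix_def)

lemma flux_matrix_offdiag_nonneg:
  assumes "\<And>i. i \<le> n \<Longrightarrow> 0 \<le> a i" "j \<noteq> k"
  shows "0 \<le> flux_matrix n a j k"
  using assms by (auto simp: flux_matrix_def)

lemma flux_matrix_diag: "j \<in> {1..n} \<Longrightarrow> flux_matrix n a j j = - (a j + a (j - 1))"
  by (simp add: flux_matrix_def)

lemma matvec_flux_matrix:
  assumes "a 0 = 0" "a n = 0" "j \<in> {1..n}"
  shows "matvec n (flux_matrix n a) x j = a j * (x (j+1) - x j) - a (j-1) * (x j - x (j-1))"
proof -
  have "matvec n (flux_matrix n a) x j =
      flux_matrix n a j (j-1) * x (j-1) + flux_matrix n a j j * x j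
      + flux_matrix n a j (j+1) * x (j+1)"
    unfolding matvec_def
    by (rule sum_atLeastAtMost_three_terms) (use assms(3) in \<open>auto simp: flux_matrix_def\<close>)
  moreover have "flux_matrix n a j (j+1) = a j"
    using assms by (cases "j = n") (auto simp: flux_matrix_def)
  moreover have "flux_matrix n a j (j-1) = a (j-1)"
    using assms by (cases "j = 1") (auto simp: flux_matrix_def)
  ultimately show ?thesis
    using assms(3) by (simp add: flux_matrix_diag algebra_simps)
qed

lemma flux_matrix_row_sum:
  assumes "a 0 = 0" "a n = 0" "j \<in> {1..n}"
  shows "(\<Sum>k = 1..n. flux_matrix n a j k) = 0"
  using matvec_flux_matrix[OF assms, where x = "\<lambda>_. 1"] by (simp add: matvec_def)

lemma flux_matrix_col_sum:
  assumes "a 0 = 0" "a n = 0" "k \<in> {1..n}"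
  shows "(\<Sum>j = 1..n. flux_matrix n a j k) = 0"
  using flux_matrix_row_sum[OF assms] by (simp add: flux_matrix_sym)

lemma matvec_flux_matrix_affine:
  assumes "a 0 = 0" "a n = 0" "j \<in> {1..n}" "\<And>k. x (k+1) - x k = s"
  shows "matvec n (flux_matrix n a) x j = s * (a j - a (j-1))"
proof -
  have "x j - x (j-1) = s"
    using assms(3) assms(4)[of "j-1"] by simp
  then show ?thesis
    using assms by (simp add: matvec_flux_matrix algebra_simps)
qed

lemma bistochastic_id_plus_scaled:
  assumes "0 \<le> \<delta>"
    and "\<And>i j. i \<in> {1..n} \<Longrightarrow> j \<in> {1..n} \<Longrightarrow> i \<noteq> j \<Longrightarrow> 0 \<le> M i j"
    and "\<And>i. i \<in> {1..n} \<Longrightarrow> -1 \<le> \<delta> * M i i"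
    and "\<And>i. i \<in> {1..n} \<Longrightarrow> (\<Sum>j = 1..n. M i j) = 0"
    and "\<And>j. j \<in> {1..n} \<Longrightarrow> (\<Sum>i = 1..n. M i j) = 0"
  shows "bistochastic n (\<lambda>i j. idmat i j + \<delta> * M i j)"
  unfolding bistochastic_def
proof (intro conjI ballI)
  fix i j assume "i \<in> {1..n}" "j \<in> {1..n}"
  then show "0 \<le> idmat i j + \<delta> * M i j"
    using assms(1) assms(2)[of i j] assms(3)[of i] by (cases "i = j") (auto simp: idmat_def)
next
  fix i assume "i \<in> {1..n}"
  then show "(\<Sum>j = 1..n. idmat i j + \<delta> * M i j) = 1"
    using assms(4) by (simp add: sum.distrib idmat_def flip: sum_distrib_left)
next
  fix j assume "j \<in> {1..n}"
  then show "(\<Sum>i = 1..n. idmat i j + \<delta> * M i j) = 1"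
    using assms(5) by (simp add: sum.distrib idmat_def flip: sum_distrib_left)
qed

lemma bistochastic_id_plus_flux_matrix:
  assumes "a 0 = 0" "a n = 0" "\<And>i. i \<le> n \<Longrightarrow> 0 \<le> a i" "\<And>i. i \<le> n \<Longrightarrow> a i \<le> b"
    and "0 \<le> \<delta>" "2 * \<delta> * b \<le> 1"
  shows "bistochastic n (\<lambda>i j. idmat i j + \<delta> * flux_matrix n a i j)"
proof (rule bistochastic_id_plus_scaled)
  show "-1 \<le> \<delta> * flux_matrix n a i i" if "i \<in> {1..n}" for i
  proof -
    have "a i \<le> b" "a (i-1) \<le> b"
      using that by (auto intro: assms(4))
    then have "\<delta> * (a i + a (i-1)) \<le> \<delta> * (2 * b)"
      using assms(5) by (intro mult_left_mono) auto
    then show ?thesis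
      using that assms(6) by (simp add: flux_matrix_diag algebra_simps)
  qed
qed (use assms flux_matrix_row_sum[OF assms(1,2)] flux_matrix_col_sum[OF assms(1,2)] in
    \<open>auto simp: flux_matrix_offdiag_nonneg\<close>)

definition interface_coeff :: "nat \<Rightarrow> nat \<Rightarrow> real" where
  "interface_coeff N j = real j * (2 * real N - real j)"

lemma Dmat_eq_flux_matrix:
  assumes "N \<ge> 1"
  shows "Dmat N = flux_matrix (2*N) (interface_coeff N)"
proof -
  have "(1 - (vh N j)\<^sup>2) / (dv N)\<^sup>2 = interface_coeff N j" for j
    using assms by (simp add: interface_coeff_def vh_def dv_def field_simps power2_eq_square)
  then show ?thesis
    by (intro ext) (simp only: Dmat_def flux_matrix_def add_divide_distrib flip: minus_divide_left)
qed

lemma interface_coeff_0 [simp]: "interface_coeff N 0 = 0"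
  and interface_coeff_double [simp]: "interface_coeff N (2*N) = 0"
  by (simp_all add: interface_coeff_def)

lemma interface_coeff_nonneg: "j \<le> 2*N \<Longrightarrow> 0 \<le> interface_coeff N j"
  by (simp add: interface_coeff_def)

lemma interface_coeff_le_square: "interface_coeff N j \<le> (real N)\<^sup>2"
  using zero_le_power2[of "real N - real j"]
  by (simp add: interface_coeff_def power2_eq_square algebra_simps)

lemma interface_coeff_diff:
  "j \<ge> 1 \<Longrightarrow> interface_coeff N j - interface_coeff N (j-1) = 2 * real N - 2 * real j + 1"
  by (simp add: interface_coeff_def algebra_simps)

lemma vc_eq: "N \<ge> 1 \<Longrightarrow> vc N j = (2 * real j - 2 * real N - 1) / (2 * real N)"
  by (simp add: vc_def dv_def field_simps)

lemma vc_step: "N \<ge> 1 \<Longrightarrow> vc N (k+1) - vc N k = 1 / real N"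
  by (simp add: vc_eq field_simps)

lemma Dmat_vc:
  assumes "N \<ge> 1" "j \<in> {1..2*N}"
  shows "matvec (2*N) (Dmat N) (vc N) j = -2 * vc N j"
proof -
  have "matvec (2*N) (Dmat N) (vc N) j = 1 / real N * (interface_coeff N j - interface_coeff N (j-1))"
    unfolding Dmat_eq_flux_matrix[OF assms(1)]
    by (rule matvec_flux_matrix_affine) (use assms vc_step in auto)
  also have "interface_coeff N j - interface_coeff N (j-1) = 2 * real N - 2 * real j + 1"
    using assms(2) by (intro interface_coeff_diff) simp
  also have "1 / real N * (2 * real N - 2 * real j + 1) = -2 * vc N j"
    using assms by (simp add: vc_eq field_simps)
  finally show ?thesis .
qed

theorem proposition4:
  fixes N :: nat
  assumes "N \<ge> 1"
  shows "(\<forall>j\<in>{1..2*N}. matvec (2*N) (Dmat N) (\<lambda>_. 1) j = 0)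
       \<and> (\<forall>j\<in>{1..2*N}. matvec (2*N) (Dmat N) (vc N) j = -2 * vc N j)
       \<and> (\<forall>j\<in>{1..2*N}. \<forall>k\<in>{1..2*N}. Dmat N j k = Dmat N k j)
       \<and> (\<forall>j\<in>{1..2*N}. \<forall>k\<in>{1..2*N}. j \<noteq> k \<longrightarrow> 0 \<le> Dmat N j k)
       \<and> (\<exists>\<delta>0>0. \<forall>\<delta>::real. 0 < \<delta> \<and> \<delta> \<le> \<delta>0 \<longrightarrow>
            bistochastic (2*N) (\<lambda>j k. idmat j k + \<delta> * Dmat N j k))"
proof -
  note D = Dmat_eq_flux_matrix[OF assms]
  have "matvec (2*N) (Dmat N) (\<lambda>_. 1) j = 0" if "j \<in> {1..2*N}" for j
    unfolding D matvec_flux_matrix[OF interface_coeff_0 interface_coeff_double that] by simp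
  moreover have "Dmat N j k = Dmat N k j" for j k
    unfolding D by (rule flux_matrix_sym)
  moreover have "0 \<le> Dmat N j k" if "j \<noteq> k" for j k
    unfolding D using interface_coeff_nonneg that by (rule flux_matrix_offdiag_nonneg)
  moreover have "bistochastic (2*N) (\<lambda>j k. idmat j k + \<delta> * Dmat N j k)"
    if "0 < \<delta>" "\<delta> \<le> 1 / (2 * (real N)\<^sup>2)" for \<delta>
    unfolding D
  proof (rule bistochastic_id_plus_flux_matrix)
    show "2 * \<delta> * (real N)\<^sup>2 \<le> 1"
      using that assms by (simp add: field_simps)
  qed (use that in \<open>simp_all add: interface_coeff_nonneg interface_coeff_le_square\<close>)
  moreover have "0 < 1 / (2 * (real N)\<^sup>2)"
    using assms by simp
  ultimately show ?thesis
    using Dmat_vc[OF assms] by blast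
qed

end
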